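(* Let $T$ be a Huffman code tree for $p$ (average length $L_H$), with $P_R\ge 1/2$ its larger root-subtree probability. Then for every $N\ge2$, $\min\{L_H,L^{(\mathrm I)}_N\}=L_H-\delta^{(\mathrm I)}_N(P_R)$ and $\min\{L_H,L^{(\mathrm{II})}\}=L_H-\delta^{(\mathrm{II})}(P_R)$, where $L^{(\mathrm I)}_N$, $L^{(\mathrm{II})}$ are the average code lengths of the Type-I AEDS with $N$ states and the Type-II AEDS built on $T$, and $\delta^{(\mathrm I)}_N(P)=\left[\frac{1-P^{N-1}}{1-P^{N}}P+\frac{1-P^{2^k-N}}{1-P^{N}}(1-P)-k(1-P)\right]_0$ with $k=\lceil\lg N\rceil$, $\delta^{(\mathrm{II})}(P)=\left[\frac{P^3-P^2+2P-1}{(2-P)(1+P+P^2)}\right]_0$, $[u]_0=\max\{u,0\}$. Consequently, if $P_R>(\sqrt5-1)/2\approx0.6180$ then $L^{(\mathrm I)}_2<L_H$, and if $P_R>\omega^{(\mathrm{II})}\approx0.56984$ (the real root of $P^3-P^2+2P-1=0$) then $L^{(\mathrm{II})}<L_H$.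
   Context: Let $\mathcal S$ be a finite alphabet with $|\mathcal S|\ge 2$ and $p=\{p(s)\}$ a probability distribution with $p(s)>0$ (i.i.d. source). $\mathcal B=\{0,1\}^*$, $l(\beta)$ the length of $\beta$, $\lg=\log_2$. An AEDS with finite state set $\mathcal X$ consists of maps $E_{\hat x}:\mathcal S\to\mathcal B$, $F^-_{\hat x}:\mathcal S\to\mathcal X$ ($\hat x\in\mathcal X$) such that for every $x$ the words $E_{\hat x}(s)$ over pairs with $F^-_{\hat x}(s)=x$ are distinct and prefix-free. The state chain moves from $\hat x$ to $F^-_{\hat x}(s)$ with probability $p(s)$; with its stationary distribution $Q$, the average code length is $L=\sum_{\hat x}\sum_s p(s)Q(\hat x)l(E_{\hat x}(s))$. For a code tree $T$ (prefix-free code, codeword $c_T(s)$ of length $l_T(s)\ge1$): $\mathcal S_R,\mathcal S_L$ are the symbols in the right/left root subtree (both nonempty), $P_R=\sum_{\mathcal S_R}p(s)\ge1/2$; $t_R(s)$, $t_L(s)$ denote $c_T(s)$ with its first bit removed. The Huffman code tree is any tree of an optimal (Huffman) prefix code; $L_H$ its average length. Type-I AEDS with $N\ge2$ states $\alpha_1..\alpha_N$ on $T$: with $k=\lceil\lg N\rceil$ and a prefix-free set $\pi_1..\pi_N$ with $l(\pi_j)=k-1$ for $j\le 2^k-N$ and $k$ otherwise: for $s\in\mathcal S_R$, $F^-_{\alpha_j}(s)=\alpha_{j+1}$, $E_{\alpha_j}(s)=t_R(s)$ ($j<N$), $F^-_{\alpha_N}(s)=\alpha_1$, $E_{\alpha_N}(s)=0t_R(s)$;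 for $s\in\mathcal S_L$, $F^-_{\alpha_j}(s)=\alpha_1$, $E_{\alpha_j}(s)=1\pi_jt_L(s)$. Type-II AEDS with states $\alpha_1..\alpha_5$ on $T$ (pairs $(F^-(s),E(s))$): $\alpha_1$: $\mathcal S_R\mapsto(\alpha_3,0t_R)$, $\mathcal S_L\mapsto(\alpha_2,t_L)$; $\alpha_2$: $\mathcal S_R\mapsto(\alpha_3,10t_R)$, $\mathcal S_L\mapsto(\alpha_1,111t_L)$; $\alpha_3$: $\mathcal S_R\mapsto(\alpha_4,t_R)$, $\mathcal S_L\mapsto(\alpha_1,0t_L)$; $\alpha_4$: $\mathcal S_R\mapsto(\alpha_5,t_R)$, $\mathcal S_L\mapsto(\alpha_1,10t_L)$; $\alpha_5$: $\mathcal S_R\mapsto(\alpha_3,11t_R)$, $\mathcal S_L\mapsto(\alpha_1,110t_L)$. *)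

theory Defs
  imports Complex_Main "HOL-Library.Sublist"
begin

text \<open>Codes over a finite alphabet 'a; codewords are bit lists (False = 0, True = 1).\<close>

definition prefix_free :: "('a \<Rightarrow> bool list) \<Rightarrow> bool" where
  "prefix_free c \<longleftrightarrow> (\<forall>s s'. s \<noteq> s' \<longrightarrow> \<not> prefix (c s) (c s'))"

definition code_len :: "('a::finite \<Rightarrow> real) \<Rightarrow> ('a \<Rightarrow> bool list) \<Rightarrow> real" where
  "code_len p c = (\<Sum>s\<in>UNIV. p s * real (length (c s)))"

definition huffman_code :: "('a::finite \<Rightarrow> real) \<Rightarrow> ('a \<Rightarrow> bool list) \<Rightarrow> bool" where
  "huffman_code p c \<longleftrightarrow> prefix_free c \<and>
     (\<forall>c'. prefix_free c' \<longrightarrow> code_len p c \<le> code_len p c')"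

definition subtree_prob :: "('a::finite \<Rightarrow> real) \<Rightarrow> ('a \<Rightarrow> bool list) \<Rightarrow> bool \<Rightarrow> real" where
  "subtree_prob p c b = (\<Sum>s\<in>{s. hd (c s) = b}. p s)"

definition stationary :: "'x set \<Rightarrow> ('x \<Rightarrow> 'a::finite \<Rightarrow> 'x) \<Rightarrow> ('a \<Rightarrow> real) \<Rightarrow> ('x \<Rightarrow> real) \<Rightarrow> bool" where
  "stationary X F p Q \<longleftrightarrow> (\<forall>x\<in>X. 0 \<le> Q x) \<and> sum Q X = 1 \<and>
     (\<forall>y\<in>X. Q y = (\<Sum>x\<in>X. Q x * (\<Sum>s\<in>{s. F x s = y}. p s)))"

definition aeds_len :: "'x set \<Rightarrow> ('x \<Rightarrow> 'a::finite \<Rightarrow> bool list) \<Rightarrow> ('a \<Rightarrow> real) \<Rightarrow> ('x \<Rightarrow> real) \<Rightarrow> real" where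
  "aeds_len X E p Q = (\<Sum>x\<in>X. \<Sum>s\<in>UNIV. p s * Q x * real (length (E x s)))"

definition kN :: "nat \<Rightarrow> nat" where
  "kN N = nat \<lceil>log 2 (real N)\<rceil>"

definition valid_pi :: "nat \<Rightarrow> (nat \<Rightarrow> bool list) \<Rightarrow> bool" where
  "valid_pi N \<pi> \<longleftrightarrow>
     (\<forall>j\<in>{1..N}. length (\<pi> j) = (if j \<le> 2 ^ kN N - N then kN N - 1 else kN N)) \<and>
     (\<forall>i\<in>{1..N}. \<forall>j\<in>{1..N}. i \<noteq> j \<longrightarrow> \<not> prefix (\<pi> i) (\<pi> j))"

text \<open>Type-I AEDS with states 1..N built on code c; the "right" subtree S_R is the set of
  symbols whose codeword starts with bit b.\<close>
definition typeI_F :: "nat \<Rightarrow> ('a \<Rightarrow> bool list) \<Rightarrow> bool \<Rightarrow> nat \<Rightarrow> 'a \<Rightarrow> nat" where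
  "typeI_F N c b j s = (if hd (c s) = b then (if j < N then j + 1 else 1) else 1)"

definition typeI_E :: "nat \<Rightarrow> (nat \<Rightarrow> bool list) \<Rightarrow> ('a \<Rightarrow> bool list) \<Rightarrow> bool \<Rightarrow> nat \<Rightarrow> 'a \<Rightarrow> bool list" where
  "typeI_E N \<pi> c b j s =
     (if hd (c s) = b then (if j < N then tl (c s) else False # tl (c s))
      else True # \<pi> j @ tl (c s))"

definition typeII_F :: "('a \<Rightarrow> bool list) \<Rightarrow> bool \<Rightarrow> nat \<Rightarrow> 'a \<Rightarrow> nat" where
  "typeII_F c b j s =
     (if hd (c s) = b then (if j = 3 then 4 else if j = 4 then 5 else 3)
      else (if j = 1 then 2 else 1))"

definition typeII_E :: "('a \<Rightarrow> bool list) \<Rightarrow> bool \<Rightarrow> nat \<Rightarrow> 'a \<Rightarrow> bool list" where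
  "typeII_E c b j s =
     (if hd (c s) = b then
        (if j = 1 then [False] else if j = 2 then [True, False]
         else if j = 5 then [True, True] else []) @ tl (c s)
      else
        (if j = 1 then [] else if j = 2 then [True, True, True]
         else if j = 3 then [False] else if j = 4 then [True, False]
         else [True, True, False]) @ tl (c s))"

definition pos0 :: "real \<Rightarrow> real" where
  "pos0 u = max u 0"

definition deltaI :: "nat \<Rightarrow> real \<Rightarrow> real" where
  "deltaI N P = pos0 ((1 - P ^ (N - 1)) / (1 - P ^ N) * P
                     + (1 - P ^ (2 ^ kN N - N)) / (1 - P ^ N) * (1 - P)
                     - real (kN N) * (1 - P))"

definition deltaII :: "real \<Rightarrow> real" where
  "deltaII P = pos0 ((P ^ 3 - P ^ 2 + 2 * P - 1) / ((2 - P) * (1 + P + P ^ 2)))"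

text \<open>The (unique) real root of P^3 - P^2 + 2P - 1.\<close>
definition omegaII :: real where
  "omegaII = (THE x. x ^ 3 - x ^ 2 + 2 * x - 1 = 0)"

end

(*
  Both AEDS keep every Huffman codeword except its first bit, which is replaced by a word
  depending only on the current state and on the root subtree of the symbol. Hence the expected
  length in state j is L_H + r_j P_R + l_j (1 - P_R), and everything reduces to the stationary
  distribution of the state chain. For Type I, symbols of S_R advance the state and symbols of
  S_L reset it, so Q_j is proportional to P_R^(j-1); for Type II the five balance equations are
  solved directly. This gives L_H - L in closed form, and min L_H L = L_H - [L_H - L]_0.
  Optimality of the Huffman code forces P_R < 1 (otherwise the common first bit could be
  deleted). The thresholds are the roots of the numerators P^2 + P - 1 (Type I, N = 2) and
  P^3 - P^2 + 2P - 1 (Type II), the latter being strictly increasing.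
*)
theory Submission
  imports Defs
begin

lemma min_eq_minus_pos0: "min a b = a - pos0 (a - b)"
  by (simp add: pos0_def min_def max_def)

lemma one_diff_power_eq_sum_atLeast1:
  fixes x :: "'a::{comm_ring,monoid_mult}"
  shows "1 - x ^ m = (1 - x) * (\<Sum>j=1..m. x ^ (j - 1))"
  by (simp add: one_diff_power_eq sum.atLeast1_atMost_eq)

lemma kN_ge_1:
  assumes "N \<ge> 2"
  shows "kN N \<ge> 1"
proof -
  have "log 2 (real N) \<ge> 1"
    using assms by (simp add: le_log_iff)
  then show ?thesis
    unfolding kN_def by linarith
qed

lemma two_power_kN_le:
  assumes "N \<ge> 2"
  shows "2 ^ kN N \<le> 2 * N"
proof -
  have "real (kN N) < log 2 (real N) + 1"
    using kN_ge_1[OF assms] unfolding kN_def by linarith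
  then have "2 powr real (kN N) < 2 powr (log 2 (real N) + 1)"
    by (intro powr_less_mono) auto
  also have "\<dots> = 2 * real N"
    using assms by (simp add: powr_add)
  finally have "real (2 ^ kN N) < real (2 * N)"
    by (simp add: powr_realpow)
  then show ?thesis
    by linarith
qed

lemma real_length_tl: "xs \<noteq> [] \<Longrightarrow> real (length (tl xs)) = real (length xs) - 1"
  by (cases xs) auto

lemma one_plus_x_plus_x2_pos:
  fixes x :: real
  shows "0 < 1 + x + x ^ 2"
proof -
  have "1 + x + x ^ 2 = (x + 1 / 2) ^ 2 + 3 / 4"
    by (simp add: power2_eq_square algebra_simps)
  moreover have "0 \<le> (x + 1 / 2) ^ 2"
    by simp
  ultimately show ?thesis
    by linarith
qed

lemma aeds_len_eq_sum_states:
  "aeds_len X E p Q = (\<Sum>x\<in>X. Q x * (\<Sum>s\<in>UNIV. p s * real (length (E x s))))"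
  by (simp add: aeds_len_def sum_distrib_left mult_ac)

lemma stationaryD:
  "stationary X F p Q \<Longrightarrow> y \<in> X \<Longrightarrow> Q y = (\<Sum>x\<in>X. Q x * (\<Sum>s | F x s = y. p s))"
  unfolding stationary_def by blast

lemma stationary_sum: "stationary X F p Q \<Longrightarrow> sum Q X = 1"
  unfolding stationary_def by blast

context
  fixes p :: "'a::finite \<Rightarrow> real" and c :: "'a \<Rightarrow> bool list" and b :: bool
  assumes prob_sum: "(\<Sum>s\<in>UNIV. p s) = 1"
    and codewords_nonempty: "\<And>s. c s \<noteq> []"
begin

abbreviation (input) P_R :: real where "P_R \<equiv> subtree_prob p c b"

lemma sum_if_hd_code:
  "(\<Sum>s\<in>UNIV. if hd (c s) = b then f s else g s)
     = (\<Sum>s | hd (c s) = b. f s) + (\<Sum>s | hd (c s) = (\<not> b). g s)"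
proof -
  have "- {s. hd (c s) = b} = {s. hd (c s) = (\<not> b)}"
    by auto
  then show ?thesis
    by (simp add: sum.If_cases)
qed

lemma subtree_prob_Not: "subtree_prob p c (\<not> b) = 1 - P_R"
  using sum_if_hd_code[of p p] prob_sum by (simp add: subtree_prob_def)

lemma expected_length_shifted:
  fixes r l :: real
  assumes "\<And>s. real (length (E s)) = real (length (c s)) + (if hd (c s) = b then r else l)"
  shows "(\<Sum>s\<in>UNIV. p s * real (length (E s))) = code_len p c + r * P_R + l * (1 - P_R)"
proof -
  have "(\<Sum>s\<in>UNIV. p s * real (length (E s)))
      = (\<Sum>s\<in>UNIV. p s * real (length (c s)) + (if hd (c s) = b then r * p s else l * p s))"
    by (intro sum.cong) (simp_all add: assms algebra_simps)
  also have "\<dots> = code_len p c + r * P_R + l * subtree_prob p c (\<not> b)"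
    by (simp add: sum.distrib code_len_def sum_if_hd_code subtree_prob_def sum_distrib_left)
  also have "\<dots> = code_len p c + r * P_R + l * (1 - P_R)"
    by (simp add: subtree_prob_Not)
  finally show ?thesis .
qed

lemma branch_prob:
  "(\<Sum>s | (if hd (c s) = b then u else v) = y. p s)
     = (if u = y then P_R else 0) + (if v = y then 1 - P_R else 0)"
proof -
  have "(\<Sum>s | (if hd (c s) = b then u else v) = y. p s)
      = (\<Sum>s\<in>UNIV. if hd (c s) = b then (if u = y then p s else 0) else (if v = y then p s else 0))"
    by (rule sum.mono_neutral_cong_left) auto
  then show ?thesis
    using subtree_prob_Not by (simp add: sum_if_hd_code subtree_prob_def)
qed

lemma typeI_state_length:
  "(\<Sum>s\<in>UNIV. p s * real (length (typeI_E N \<pi> c b j s)))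
     = code_len p c + (if j < N then -1 else 0) * P_R + real (length (\<pi> j)) * (1 - P_R)"
  by (rule expected_length_shifted)
    (auto simp: typeI_E_def real_length_tl codewords_nonempty simp del: length_tl)

lemma typeI_aeds_len:
  assumes N: "N \<ge> 2" and \<pi>: "valid_pi N \<pi>" and Q: "sum Q {1..N} = 1"
  shows "aeds_len {1..N} (typeI_E N \<pi> c b) p Q
       = code_len p c - P_R + real (kN N) * (1 - P_R) + P_R * Q N
         - (1 - P_R) * (\<Sum>j=1..2 ^ kN N - N. Q j)"
proof -
  define k where "k = kN N"
  define m where "m = 2 ^ k - N"
  have "m \<le> N"
    using two_power_kN_le[OF N] by (simp add: m_def k_def)
  have len_\<pi>: "real (length (\<pi> j)) = real k - (if j \<in> {1..m} then 1 else 0)" if "j \<in> {1..N}" for j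
    using \<pi> that kN_ge_1[OF N] unfolding valid_pi_def k_def[symmetric] m_def[symmetric] by auto
  have "aeds_len {1..N} (typeI_E N \<pi> c b) p Q
      = (\<Sum>j\<in>{1..N}. Q j * (code_len p c - P_R + real k * (1 - P_R))
           + (if j = N then P_R * Q j else 0) - (if j \<in> {1..m} then (1 - P_R) * Q j else 0))"
    unfolding aeds_len_eq_sum_states typeI_state_length
    by (intro sum.cong) (auto simp: len_\<pi> algebra_simps)
  also have "\<dots> = code_len p c - P_R + real k * (1 - P_R) + P_R * Q N - (1 - P_R) * (\<Sum>j=1..m. Q j)"
  proof -
    have "(\<Sum>j\<in>{1..N}. Q j * (code_len p c - P_R + real k * (1 - P_R)))
        = code_len p c - P_R + real k * (1 - P_R)"
      using Q by (simp add: sum_distrib_right[symmetric])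
    moreover have "(\<Sum>j\<in>{1..N}. if j = N then P_R * Q j else 0) = P_R * Q N"
      using N by simp
    moreover have "(\<Sum>j\<in>{1..N}. if j \<in> {1..m} then (1 - P_R) * Q j else 0)
        = (1 - P_R) * (\<Sum>j=1..m. Q j)"
    proof -
      have "{1..N} \<inter> {1..m} = {1..m}"
        using \<open>m \<le> N\<close> by auto
      then show ?thesis
        by (simp only: sum.inter_restrict[OF finite_atLeastAtMost, symmetric] sum_distrib_left)
    qed
    ultimately show ?thesis
      by (simp only: sum.distrib sum_subtractf)
  qed
  finally show ?thesis
    unfolding m_def k_def .
qed

lemma typeI_stationary_geometric:
  assumes st: "stationary {1..N} (typeI_F N c b) p Q" and P: "0 \<le> P_R" "P_R < 1"
    and j: "j \<in> {1..N}"
  shows "Q j = (1 - P_R) * P_R ^ (j - 1) / (1 - P_R ^ N)"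
proof -
  have step: "Q (Suc i) = P_R * Q i" if "1 \<le> i" "i < N" for i
  proof -
    have "Q (Suc i) = (\<Sum>x\<in>{1..N}. Q x * (\<Sum>s | typeI_F N c b x s = Suc i. p s))"
      using stationaryD[OF st, of "Suc i"] that by simp
    also have "\<dots> = (\<Sum>x\<in>{1..N}. if x = i then P_R * Q x else 0)"
      unfolding typeI_F_def branch_prob by (intro sum.cong) (use that in auto)
    finally show ?thesis
      using that by simp
  qed
  have geometric: "Q i = P_R ^ (i - 1) * Q 1" if "1 \<le> i" "i \<le> N" for i
    using that
  proof (induction i rule: nat_induct_at_least)
    case (Suc i)
    then show ?case
      using step[of i] by (simp add: power_eq_if)
  qed simp
  have "(\<Sum>i=1..N. Q i) = Q 1 * (\<Sum>i=1..N. P_R ^ (i - 1))"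
    unfolding sum_distrib_left
    by (intro sum.cong refl) (metis atLeastAtMost_iff geometric mult.commute)
  then have "1 - P_R = Q 1 * (1 - P_R ^ N)"
    using stationary_sum[OF st] by (simp add: one_diff_power_eq_sum_atLeast1[of P_R N])
  moreover have "P_R ^ N < 1"
    using j P by (simp add: power_less_one_iff)
  ultimately have Q1: "Q 1 = (1 - P_R) / (1 - P_R ^ N)"
    by simp
  show ?thesis
    using geometric[of j] j unfolding Q1 by simp
qed

lemma typeI_stationary_partial_sum:
  assumes st: "stationary {1..N} (typeI_F N c b) p Q" and P: "0 \<le> P_R" "P_R < 1"
    and "m \<le> N"
  shows "(\<Sum>j=1..m. Q j) = (1 - P_R ^ m) / (1 - P_R ^ N)"
proof -
  have "(\<Sum>j=1..m. Q j) = (1 - P_R) / (1 - P_R ^ N) * (\<Sum>j=1..m. P_R ^ (j - 1))"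
    unfolding sum_distrib_left
    by (intro sum.cong refl) (use \<open>m \<le> N\<close> in \<open>simp add: typeI_stationary_geometric[OF st P]\<close>)
  then show ?thesis
    by (simp add: one_diff_power_eq_sum_atLeast1[of P_R m])
qed

lemma typeI_gain:
  assumes N: "N \<ge> 2" and \<pi>: "valid_pi N \<pi>" and st: "stationary {1..N} (typeI_F N c b) p Q"
    and P: "0 \<le> P_R" "P_R < 1"
  shows "code_len p c - aeds_len {1..N} (typeI_E N \<pi> c b) p Q
       = (1 - P_R ^ (N - 1)) / (1 - P_R ^ N) * P_R
         + (1 - P_R ^ (2 ^ kN N - N)) / (1 - P_R ^ N) * (1 - P_R) - real (kN N) * (1 - P_R)"
proof -
  define a where "a = P_R ^ (N - 1)"
  have PN: "P_R ^ N = P_R * a"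
    using N by (simp add: a_def flip: power_Suc)
  have "P_R * a < 1"
    using N P by (simp add: power_less_one_iff flip: PN)
  moreover have "Q N * (1 - P_R * a) = (1 - P_R) * a"
    using N typeI_stationary_geometric[OF st P, of N] \<open>P_R * a < 1\<close> by (simp add: a_def PN)
  then have "(P_R - P_R * Q N) * (1 - P_R * a) = (1 - a) * P_R"
    by algebra
  ultimately have "P_R - P_R * Q N = (1 - a) / (1 - P_R ^ N) * P_R"
    by (simp add: PN field_simps)
  moreover have "(\<Sum>j=1..2 ^ kN N - N. Q j) = (1 - P_R ^ (2 ^ kN N - N)) / (1 - P_R ^ N)"
    using two_power_kN_le[OF N] by (intro typeI_stationary_partial_sum[OF st P]) simp
  ultimately show ?thesis
    unfolding typeI_aeds_len[OF N \<pi> stationary_sum[OF st]] a_def by (simp add: algebra_simps)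
qed

lemma typeII_aeds_len:
  assumes Q: "sum Q {1..5} = 1"
  shows "aeds_len {1..5} (typeII_E c b) p Q
       = code_len p c - (1 - P_R) * Q 1 + (2 - P_R) * Q 2 - P_R * Q 3
         + (1 - 2 * P_R) * Q 4 + (2 - P_R) * Q 5"
proof -
  have state: "(\<Sum>s\<in>UNIV. p s * real (length (typeII_E c b j s)))
      = code_len p c + (if j = 1 then 0 else if j \<in> {2, 5} then 1 else -1) * P_R
        + (if j = 1 then -1 else if j = 3 then 0 else if j = 4 then 1 else 2) * (1 - P_R)" for j
    by (rule expected_length_shifted)
      (auto simp: typeII_E_def real_length_tl codewords_nonempty simp del: length_tl)
  have five: "{1..5::nat} = {1, 2, 3, 4, 5}"
    by auto
  have "aeds_len {1..5} (typeII_E c b) p Q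
      = code_len p c * (Q 1 + Q 2 + Q 3 + Q 4 + Q 5) - (1 - P_R) * Q 1 + (2 - P_R) * Q 2
        - P_R * Q 3 + (1 - 2 * P_R) * Q 4 + (2 - P_R) * Q 5"
    unfolding aeds_len_eq_sum_states state five by (simp add: algebra_simps)
  moreover have "Q 1 + Q 2 + Q 3 + Q 4 + Q 5 = 1"
    using Q unfolding five by simp
  ultimately show ?thesis
    by simp
qed

lemma typeII_stationary:
  assumes st: "stationary {1..5} (typeII_F c b) p Q" and P: "P_R < 1"
  shows "Q 1 = (1 - P_R) / (2 - P_R)" "Q 2 = (1 - P_R) ^ 2 / (2 - P_R)"
    and "Q 3 = P_R / (1 + P_R + P_R ^ 2)" "Q 4 = P_R ^ 2 / (1 + P_R + P_R ^ 2)"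
    and "Q 5 = P_R ^ 3 / (1 + P_R + P_R ^ 2)"
proof -
  have five: "{1..5::nat} = {1, 2, 3, 4, 5}"
    by auto
  have balance: "Q y = (\<Sum>x\<in>{1, 2, 3, 4, 5}. Q x *
      ((if (if x = 3 then 4 else if x = 4 then 5 else 3) = y then P_R else 0)
       + (if (if x = 1 then 2 else 1) = y then 1 - P_R else 0)))" if "y \<in> {1..5}" for y
    using stationaryD[OF st that] unfolding typeII_F_def branch_prob five .
  have total: "Q 1 + Q 2 + Q 3 + Q 4 + Q 5 = 1"
    using stationary_sum[OF st] unfolding five by simp
  have Q2: "Q 2 = (1 - P_R) * Q 1"
    using balance[of 2] by simp
  have Q4: "Q 4 = P_R * Q 3"
    using balance[of 4] by simp
  have Q5: "Q 5 = P_R * Q 4"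
    using balance[of 5] by simp
  have "Q 1 = (1 - P_R) * (Q 2 + Q 3 + Q 4 + Q 5)"
    using balance[of 1] by (simp add: algebra_simps)
  also have "Q 2 + Q 3 + Q 4 + Q 5 = 1 - Q 1"
    using total by simp
  finally have "(2 - P_R) * Q 1 = 1 - P_R"
    by (simp add: algebra_simps)
  moreover have "2 - P_R > 0"
    using P by simp
  ultimately show Q1: "Q 1 = (1 - P_R) / (2 - P_R)"
    by (simp add: field_simps)
  then show "Q 2 = (1 - P_R) ^ 2 / (2 - P_R)"
    by (simp add: Q2 power2_eq_square)
  have "(1 + P_R + P_R ^ 2) * Q 3 = Q 3 + Q 4 + Q 5"
    by (simp add: Q4 Q5 power2_eq_square algebra_simps)
  also have "\<dots> = 1 - Q 1 - Q 2"
    using total by simp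
  also have "\<dots> = 1 - (2 - P_R) * Q 1"
    by (simp add: Q2 algebra_simps)
  also have "\<dots> = P_R"
    using \<open>2 - P_R > 0\<close> unfolding Q1 by simp
  finally have "(1 + P_R + P_R ^ 2) * Q 3 = P_R" .
  moreover have "1 + P_R + P_R ^ 2 > 0"
    by (rule one_plus_x_plus_x2_pos)
  ultimately show Q3: "Q 3 = P_R / (1 + P_R + P_R ^ 2)"
    by (simp add: field_simps)
  then show "Q 4 = P_R ^ 2 / (1 + P_R + P_R ^ 2)"
    by (simp add: Q4 power2_eq_square)
  then show "Q 5 = P_R ^ 3 / (1 + P_R + P_R ^ 2)"
    by (simp add: Q5 power3_eq_cube power2_eq_square)
qed

lemma typeII_gain:
  assumes st: "stationary {1..5} (typeII_F c b) p Q" and P: "P_R < 1"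
  shows "code_len p c - aeds_len {1..5} (typeII_E c b) p Q
       = (P_R ^ 3 - P_R ^ 2 + 2 * P_R - 1) / ((2 - P_R) * (1 + P_R + P_R ^ 2))"
proof -
  define d1 where "d1 = 2 - P_R"
  define d2 where "d2 = 1 + P_R + P_R ^ 2"
  have "d1 \<noteq> 0" "d2 \<noteq> 0"
    using P one_plus_x_plus_x2_pos[of P_R] by (simp_all add: d1_def d2_def)
  then show ?thesis
    unfolding typeII_aeds_len[OF stationary_sum[OF st]] typeII_stationary[OF st P]
      d1_def[symmetric] d2_def[symmetric]
    by (simp add: field_simps) (simp add: d1_def d2_def algebra_simps power_numeral_reduce)
qed

end

lemma prefix_free_nonempty:
  fixes c :: "'a::finite \<Rightarrow> bool list"
  assumes "prefix_free c" and "card (UNIV :: 'a set) \<ge> 2"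
  shows "c s \<noteq> []"
proof
  assume "c s = []"
  have "UNIV \<noteq> {s}"
  proof
    assume "UNIV = {s}"
    then have "card (UNIV :: 'a set) = card {s}"
      by (simp only:)
    with assms(2) show False
      by simp
  qed
  then obtain s' where "s' \<noteq> s"
    by blast
  then show False
    using assms(1) \<open>c s = []\<close> unfolding prefix_free_def by (metis Nil_prefix)
qed

text \<open>If all codewords began with the same bit, deleting it would give a shorter prefix-free
  code.\<close>
lemma huffman_code_hd_not_constant:
  fixes p :: "'a::finite \<Rightarrow> real"
  assumes huffman: "huffman_code p c" and pos: "\<And>s. p s > 0" and nonempty: "\<And>s. c s \<noteq> []"
  shows "\<exists>s. hd (c s) \<noteq> b"
proof (rule ccontr)
  assume "\<not> (\<exists>s. hd (c s) \<noteq> b)"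
  then have hd_eq: "hd (c s) = b" for s
    by blast
  have c_eq: "c s = b # tl (c s)" for s
    using list.collapse[OF nonempty[of s]] by (simp add: hd_eq)
  have "prefix_free (\<lambda>s. tl (c s))"
    unfolding prefix_free_def
  proof (intro allI impI)
    fix s s' :: 'a
    assume "s \<noteq> s'"
    then have "\<not> prefix (c s) (c s')"
      using huffman unfolding huffman_code_def prefix_free_def by blast
    show "\<not> prefix (tl (c s)) (tl (c s'))"
    proof
      assume "prefix (tl (c s)) (tl (c s'))"
      then have "prefix (b # tl (c s)) (b # tl (c s'))"
        by simp
      then show False
        using \<open>\<not> prefix (c s) (c s')\<close> by (simp only: c_eq[symmetric])
    qed
  qed
  then have "code_len p c \<le> code_len p (\<lambda>s. tl (c s))"
    using huffman unfolding huffman_code_def by blast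
  also have "\<dots> = code_len p c - sum p UNIV"
    unfolding code_len_def sum_subtractf[symmetric]
    by (intro sum.cong refl) (simp add: real_length_tl nonempty algebra_simps del: length_tl)
  finally have "sum p UNIV \<le> 0"
    by simp
  moreover have "sum p UNIV > 0"
    using pos by (simp add: sum_pos)
  ultimately show False
    by simp
qed

lemma huffman_subtree_prob_less_1:
  fixes p :: "'a::finite \<Rightarrow> real"
  assumes "card (UNIV :: 'a set) \<ge> 2" and pos: "\<forall>s. p s > 0" and prob_sum: "(\<Sum>s\<in>UNIV. p s) = 1"
    and huffman: "huffman_code p c"
  shows "subtree_prob p c b < 1"
proof -
  have nonempty: "\<And>s. c s \<noteq> []"
    using huffman assms(1) prefix_free_nonempty unfolding huffman_code_def by blast
  obtain s where "hd (c s) = (\<not> b)"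
    using huffman_code_hd_not_constant[OF huffman _ nonempty] pos by auto
  then have "0 < subtree_prob p c (\<not> b)"
    unfolding subtree_prob_def using pos by (intro sum_pos2[of _ s]) (auto intro: less_imp_le)
  then show ?thesis
    using subtree_prob_Not[OF prob_sum nonempty] by simp
qed

lemma omegaII_cubic_strict_mono: "strict_mono (\<lambda>x::real. x ^ 3 - x ^ 2 + 2 * x - 1)"
proof (rule strict_monoI)
  fix x y :: real
  assume "x < y"
  have "2 * (y ^ 2 + x * y + x ^ 2 - x - y + 2) = (x + y) ^ 2 + (x - 1) ^ 2 + (y - 1) ^ 2 + 2"
    by (simp add: power2_eq_square algebra_simps)
  moreover have "0 < (x + y) ^ 2 + (x - 1) ^ 2 + (y - 1) ^ 2 + 2"
    by (intro add_nonneg_pos add_nonneg_nonneg zero_le_power2) simp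
  ultimately have "0 < 2 * (y ^ 2 + x * y + x ^ 2 - x - y + 2)"
    by (simp only:)
  then have "0 < y ^ 2 + x * y + x ^ 2 - x - y + 2"
    by simp
  then have "0 < (y - x) * (y ^ 2 + x * y + x ^ 2 - x - y + 2)"
    using \<open>x < y\<close> by simp
  also have "\<dots> = (y ^ 3 - y ^ 2 + 2 * y - 1) - (x ^ 3 - x ^ 2 + 2 * x - 1)"
    by (simp add: power2_eq_square power3_eq_cube algebra_simps)
  finally show "x ^ 3 - x ^ 2 + 2 * x - 1 < y ^ 3 - y ^ 2 + 2 * y - 1"
    by simp
qed

lemma omegaII_root: "omegaII ^ 3 - omegaII ^ 2 + 2 * omegaII - 1 = 0"
proof -
  define f :: "real \<Rightarrow> real" where "f x = x ^ 3 - x ^ 2 + 2 * x - 1" for x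
  have "continuous_on {0..1} f"
    unfolding f_def by (intro continuous_intros)
  then obtain x where root: "f x = 0"
    using IVT'[of f 0 0 1] by (auto simp: f_def)
  have "omegaII = x"
    unfolding omegaII_def
  proof (rule the_equality)
    show "x ^ 3 - x ^ 2 + 2 * x - 1 = 0"
      using root by (simp add: f_def)
    show "y = x" if "y ^ 3 - y ^ 2 + 2 * y - 1 = 0" for y
      using strict_mono_eq[OF omegaII_cubic_strict_mono, of y x] that root
      unfolding f_def by simp
  qed
  with root show ?thesis
    by (simp add: f_def)
qed

lemma omegaII_less_iff: "omegaII < x \<longleftrightarrow> 0 < x ^ 3 - x ^ 2 + 2 * x - 1"
  using strict_mono_less[OF omegaII_cubic_strict_mono, of omegaII x] omegaII_root by simp

lemma deltaI_two_pos:
  assumes "(sqrt 5 - 1) / 2 < P" and "P < 1"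
  shows "0 < deltaI 2 P"
proof -
  have "sqrt 5 < 2 * P + 1"
    using assms(1) by (simp add: field_simps)
  moreover have "1 \<le> sqrt 5"
    by simp
  ultimately have "0 < P"
    by linarith
  have "(sqrt 5) ^ 2 < (2 * P + 1) ^ 2"
    using \<open>sqrt 5 < 2 * P + 1\<close> by (intro power_strict_mono) auto
  then have "0 < P ^ 2 + P - 1"
    by (simp add: power2_eq_square algebra_simps)
  moreover have "(1 - P) / (1 - P ^ 2) * P - (1 - P) = (P ^ 2 + P - 1) / (1 + P)"
  proof -
    have "1 - P ^ 2 = (1 - P) * (1 + P)"
      by (simp add: power2_eq_square algebra_simps)
    then have "(1 - P) / (1 - P ^ 2) = 1 / (1 + P)"
      using assms(2) by simp
    then have "(1 - P) / (1 - P ^ 2) * P - (1 - P) = P / (1 + P) - (1 - P)"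
      by simp
    also have "\<dots> = (P ^ 2 + P - 1) / (1 + P)"
      using \<open>0 < P\<close> by (simp add: field_simps power2_eq_square)
    finally show ?thesis .
  qed
  moreover have "kN 2 = 1"
    by (simp add: kN_def)
  ultimately show ?thesis
    using \<open>0 < P\<close> by (simp add: deltaI_def pos0_def)
qed

lemma deltaII_pos:
  assumes "omegaII < P" and "P < 2"
  shows "0 < deltaII P"
proof -
  have "0 < P ^ 3 - P ^ 2 + 2 * P - 1"
    using assms(1) omegaII_less_iff by blast
  moreover have "0 < (2 - P) * (1 + P + P ^ 2)"
    using assms(2) one_plus_x_plus_x2_pos[of P] by simp
  ultimately show ?thesis
    by (simp add: deltaII_def pos0_def)
qed

theorem corollary1:
  fixes p :: "'a::finite \<Rightarrow> real" and c :: "'a \<Rightarrow> bool list" and b :: bool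
  assumes "card (UNIV :: 'a set) \<ge> 2"
    and "\<forall>s. p s > 0"
    and "(\<Sum>s\<in>UNIV. p s) = 1"
    and "huffman_code p c"
    and "subtree_prob p c b \<ge> 1/2"
  shows "(\<forall>N \<pi> Q. N \<ge> 2 \<longrightarrow> valid_pi N \<pi> \<longrightarrow> stationary {1..N} (typeI_F N c b) p Q \<longrightarrow>
            min (code_len p c) (aeds_len {1..N} (typeI_E N \<pi> c b) p Q)
              = code_len p c - deltaI N (subtree_prob p c b))
       \<and> (\<forall>Q. stationary {1..5} (typeII_F c b) p Q \<longrightarrow>
            min (code_len p c) (aeds_len {1..5} (typeII_E c b) p Q)
              = code_len p c - deltaII (subtree_prob p c b))
       \<and> (subtree_prob p c b > (sqrt 5 - 1) / 2 \<longrightarrow>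
            (\<forall>\<pi> Q. valid_pi 2 \<pi> \<longrightarrow> stationary {1..2} (typeI_F 2 c b) p Q \<longrightarrow>
               aeds_len {1..2} (typeI_E 2 \<pi> c b) p Q < code_len p c))
       \<and> (subtree_prob p c b > omegaII \<longrightarrow>
            (\<forall>Q. stationary {1..5} (typeII_F c b) p Q \<longrightarrow>
               aeds_len {1..5} (typeII_E c b) p Q < code_len p c))"
proof -
  have nonempty: "\<And>s. c s \<noteq> []"
    using assms(1,4) prefix_free_nonempty unfolding huffman_code_def by blast
  have P: "0 \<le> subtree_prob p c b" "subtree_prob p c b < 1"
    using assms(5) huffman_subtree_prob_less_1[OF assms(1-4)] by auto
  have typeI: "min (code_len p c) (aeds_len {1..N} (typeI_E N \<pi> c b) p Q)
      = code_len p c - deltaI N (subtree_prob p c b)"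
    if "N \<ge> 2" "valid_pi N \<pi>" "stationary {1..N} (typeI_F N c b) p Q" for N \<pi> Q
    unfolding min_eq_minus_pos0 deltaI_def typeI_gain[OF assms(3) nonempty that P] ..
  have typeII: "min (code_len p c) (aeds_len {1..5} (typeII_E c b) p Q)
      = code_len p c - deltaII (subtree_prob p c b)"
    if "stationary {1..5} (typeII_F c b) p Q" for Q
    unfolding min_eq_minus_pos0 deltaII_def typeII_gain[OF assms(3) nonempty that P(2)] ..
  show ?thesis
  proof (intro conjI allI impI)
    fix \<pi> Q
    assume "(sqrt 5 - 1) / 2 < subtree_prob p c b" "valid_pi 2 \<pi>"
      and "stationary {1..2} (typeI_F 2 c b) p Q"
    then have "min (code_len p c) (aeds_len {1..2} (typeI_E 2 \<pi> c b) p Q) < code_len p c"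
      using typeI[of 2] deltaI_two_pos P(2) by simp
    then show "aeds_len {1..2} (typeI_E 2 \<pi> c b) p Q < code_len p c"
      by (simp add: min_less_iff_disj)
  next
    fix Q
    assume "omegaII < subtree_prob p c b" "stationary {1..5} (typeII_F c b) p Q"
    then have "min (code_len p c) (aeds_len {1..5} (typeII_E c b) p Q) < code_len p c"
      using typeII deltaII_pos P(2) by simp
    then show "aeds_len {1..5} (typeII_E c b) p Q < code_len p c"
      by (simp add: min_less_iff_disj)
  qed (use typeI typeII in auto)
qed

end
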